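(* Let $p>0$ and let $(u_n)_{n\in\mathbb{Z}}$ be a real sequence such that $s_n:=u_{n+2}-u_n$ satisfies $\sum_{n=-\infty}^{\infty}|s_n-2p|<\infty$, and such that $x_n:=\frac{u_{n+1}-u_{n-1}}{2p}\neq 0$ for all $n\in\mathbb{Z}$. Define sequences $(\omega_j(n))_{n\in\mathbb{Z}}$, $j=1,2,\dots$, by $$\omega_1(n)=1-\frac{1}{x_n\,x_{n-1}},\qquad \omega_2(n)=\Bigl(1-\frac{1}{x_{n-1}\,x_{n-2}}\Bigr)\frac{1}{x_n\,x_{n-1}},$$ $$\omega_{j+1}(n)=\omega_j(n-1)-\sum_{k=1}^{j}\omega_k(n-1)\,\omega_{j+1-k}(n),\qquad j=2,3,\dots.$$ Then for every $j\ge 1$, $\omega_j(n)\to 0$ as $|n|\to\infty$.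
   Context: These $\omega_j$ are the coefficients of the series solution $\omega=x_n\bigl(1+\sum_{j\ge1}\omega_j\lambda^j\bigr)$, $|\lambda|<1$, of the discrete Riccati equation $\omega_n(\omega_{n+1}-x_{n+1})-\lambda x_{n+1}\omega_n+\lambda=0$ associated with the lattice potential KdV equation. *)

theory Defs
  imports "HOL-Analysis.Analysis"
begin

text \<open>The coefficients omega_j(n) for j >= 1, given the sequence x :: int => real.
  The value at j = 0 is irrelevant and set to 0.\<close>

function omega :: "(int \<Rightarrow> real) \<Rightarrow> nat \<Rightarrow> int \<Rightarrow> real" where
  "omega x 0 n = 0"
| "omega x (Suc 0) n = 1 - 1 / (x n * x (n - 1))"
| "omega x (Suc (Suc 0)) n = (1 - 1 / (x (n - 1) * x (n - 2))) * (1 / (x n * x (n - 1)))"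
| "omega x (Suc (Suc (Suc j))) n =
     omega x (Suc (Suc j)) (n - 1)
     - (\<Sum>k\<in>{1..Suc (Suc j)}. omega x k (n - 1) * omega x (Suc (Suc (Suc j)) - k) n)"
  by pat_completeness auto
termination
  by (relation "Wellfounded.measure (\<lambda>(x, j, n). j)") auto

end

theory Submission
  imports Defs
begin

text \<open>Summability of \<open>\<bar>s\<^sub>n - 2p\<bar>\<close> forces \<open>s\<^sub>n \<rightarrow> 2p\<close> as \<open>n \<rightarrow> \<plusminus>\<infinity>\<close>, hence
  \<open>x\<^sub>n = s\<^sub>n\<^sub>-\<^sub>1 / (2p) \<rightarrow> 1\<close>. At \<open>x \<equiv> 1\<close> the factor \<open>1 - 1/(x x)\<close> kills \<open>\<omega>\<^sub>1\<close> and \<open>\<omega>\<^sub>2\<close>,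
  and the recursion expresses \<open>\<omega>\<^sub>j\<^sub>+\<^sub>1\<close> through shifted lower \<open>\<omega>\<^sub>k\<close> only. So strong induction
  on \<open>j\<close> and continuity of the arithmetic operations give \<open>\<omega>\<^sub>j(n) \<rightarrow> 0\<close> along any
  filter on \<open>\<int>\<close> that is invariant under shifts, in particular \<open>at_top\<close> and \<open>at_bot\<close>.\<close>

lemma filterlim_minus_const_at_top:
  "filterlim (\<lambda>x. x - c) at_top (at_top :: 'a::linordered_ab_group_add filter)"
  unfolding filterlim_at_top
proof
  fix Z :: 'a
  show "eventually (\<lambda>x. Z \<le> x - c) at_top"
    using eventually_ge_at_top[of "Z + c"] by eventually_elim (simp add: le_diff_eq)
qed

lemma filterlim_minus_const_at_bot:
  "filterlim (\<lambda>x. x - c) at_bot (at_bot :: 'a::linordered_ab_group_add filter)"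
  unfolding filterlim_at_bot
proof
  fix Z :: 'a
  show "eventually (\<lambda>x. x - c \<le> Z) at_bot"
    using eventually_le_at_bot[of "Z + c"] by eventually_elim (simp add: diff_le_eq)
qed

lemma summable_on_int_tendsto_zero_at_top:
  fixes f :: "int \<Rightarrow> 'a::banach"
  assumes "f summable_on UNIV"
  shows "(f \<longlongrightarrow> 0) at_top"
proof -
  have "f summable_on range int"
    using assms by (rule summable_on_subset_banach) simp
  then have "summable (f \<circ> int)"
    by (simp add: summable_on_reindex summable_on_imp_summable)
  then have "((\<lambda>n. (f \<circ> int) (nat n)) \<longlongrightarrow> 0) at_top"
    by (rule filterlim_compose[OF summable_LIMSEQ_zero filterlim_nat_sequentially])
  moreover have "eventually (\<lambda>n. (f \<circ> int) (nat n) = f n) at_top"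
    using eventually_ge_at_top[of 0] by eventually_elim simp
  ultimately show ?thesis
    by (rule Lim_transform_eventually)
qed

lemma summable_on_int_tendsto_zero_at_bot:
  fixes f :: "int \<Rightarrow> 'a::banach"
  assumes "f summable_on UNIV"
  shows "(f \<longlongrightarrow> 0) at_bot"
proof -
  have "bij_betw uminus (UNIV :: int set) UNIV"
    by (rule bij_betwI[of _ _ _ uminus]) auto
  then have "(\<lambda>n. f (- n)) summable_on UNIV"
    using assms summable_on_reindex_bij_betw by blast
  then have "((\<lambda>n. f (- n)) \<longlongrightarrow> 0) at_top"
    by (rule summable_on_int_tendsto_zero_at_top)
  then show ?thesis
    unfolding filterlim_def at_bot_mirror filtermap_filtermap by simp
qed

lemma tendsto_central_difference_quotient:
  fixes u :: "int \<Rightarrow> real" and F :: "int filter"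
  assumes shift: "\<And>c. filterlim (\<lambda>n. n - c) F F"
    and lim: "((\<lambda>n. \<bar>(u (n + 2) - u n) - 2 * p\<bar>) \<longlongrightarrow> 0) F"
    and "p \<noteq> 0"
  shows "((\<lambda>n. (u (n + 1) - u (n - 1)) / (2 * p)) \<longlongrightarrow> 1) F"
proof -
  have "((\<lambda>n. u (n + 2) - u n) \<longlongrightarrow> 2 * p) F"
    using lim by (simp add: tendsto_rabs_zero_iff LIM_zero_iff)
  then have "((\<lambda>n. u (n - 1 + 2) - u (n - 1)) \<longlongrightarrow> 2 * p) F"
    by (rule filterlim_compose) (rule shift)
  then have "((\<lambda>n. (u (n - 1 + 2) - u (n - 1)) / (2 * p)) \<longlongrightarrow> 2 * p / (2 * p)) F"
    by (rule tendsto_divide[OF _ tendsto_const]) (use \<open>p \<noteq> 0\<close> in simp)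
  then show ?thesis
    using \<open>p \<noteq> 0\<close> by (simp add: add.commute)
qed

lemma omega_tendsto_zero:
  fixes x :: "int \<Rightarrow> real" and F :: "int filter"
  assumes shift: "\<And>c. filterlim (\<lambda>n. n - c) F F"
    and x: "(x \<longlongrightarrow> 1) F"
    and "j \<ge> 1"
  shows "((\<lambda>n. omega x j n) \<longlongrightarrow> 0) F"
  using \<open>j \<ge> 1\<close>
proof (induction j rule: less_induct)
  case (less j)
  have x_shift: "((\<lambda>n. x (n - c)) \<longlongrightarrow> 1) F" for c
    using filterlim_compose[OF x shift] .
  have omega_shift: "((\<lambda>n. omega x k (n - c)) \<longlongrightarrow> 0) F" if "1 \<le> k" "k < j" for k c
    using filterlim_compose[OF less.IH[OF that(2,1)] shift] .
  consider "j = 1" | "j = 2" | i where "j = Suc (Suc (Suc i))"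
    using less.prems by (cases j; cases "j - 1"; cases "j - 2") (auto simp: numeral_2_eq_2)
  then show ?case
  proof cases
    case 1
    have "((\<lambda>n. 1 - 1 / (x n * x (n - 1))) \<longlongrightarrow> 1 - 1 / (1 * 1)) F"
      by (intro tendsto_intros x x_shift) simp
    then show ?thesis
      using 1 by simp
  next
    case 2
    have "((\<lambda>n. (1 - 1 / (x (n - 1) * x (n - 2))) * (1 / (x n * x (n - 1))))
            \<longlongrightarrow> (1 - 1 / (1 * 1)) * (1 / (1 * 1))) F"
      by (intro tendsto_intros x x_shift) simp_all
    then show ?thesis
      using 2 by (simp add: numeral_2_eq_2)
  next
    case 3
    have "((\<lambda>n. omega x (Suc (Suc i)) (n - 1)
               - (\<Sum>k\<in>{1..Suc (Suc i)}. omega x k (n - 1) * omega x (j - k) n))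
            \<longlongrightarrow> 0 - (\<Sum>k\<in>{1..Suc (Suc i)}. 0 * 0)) F"
      by (intro tendsto_intros omega_shift less.IH) (auto simp: 3)
    then show ?thesis
      using 3 by simp
  qed
qed

theorem proposition1:
  fixes p :: real and u :: "int \<Rightarrow> real"
  assumes p_pos: "p > 0"
    and summ: "(\<lambda>n. \<bar>(u (n + 2) - u n) - 2 * p\<bar>) summable_on (UNIV :: int set)"
    and x_nz: "\<And>n. (u (n + 1) - u (n - 1)) / (2 * p) \<noteq> 0"
  shows "\<forall>j \<ge> 1.
           ((\<lambda>n. omega (\<lambda>m. (u (m + 1) - u (m - 1)) / (2 * p)) j n) \<longlongrightarrow> 0) at_top \<and>
           ((\<lambda>n. omega (\<lambda>m. (u (m + 1) - u (m - 1)) / (2 * p)) j n) \<longlongrightarrow> 0) at_bot"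
proof -
  have "p \<noteq> 0"
    using p_pos by simp
  have omega_lim: "((\<lambda>n. omega (\<lambda>m. (u (m + 1) - u (m - 1)) / (2 * p)) j n) \<longlongrightarrow> 0) F"
    if "j \<ge> 1" and shift: "\<And>c. filterlim (\<lambda>n. n - c) F F"
      and decay: "((\<lambda>n. \<bar>(u (n + 2) - u n) - 2 * p\<bar>) \<longlongrightarrow> 0) F" for j F
    using shift tendsto_central_difference_quotient[OF shift decay \<open>p \<noteq> 0\<close>] \<open>j \<ge> 1\<close>
    by (rule omega_tendsto_zero)
  show ?thesis
    using omega_lim[OF _ filterlim_minus_const_at_top summable_on_int_tendsto_zero_at_top[OF summ]]
      omega_lim[OF _ filterlim_minus_const_at_bot summable_on_int_tendsto_zero_at_bot[OF summ]]
    by blast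
qed

end
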